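(* In the standard LLP setup, for all $s\in\Sigma^*$ and all $N,M\ge1$: $\overline{f^M_{cons}(s)}|_1\subseteq\overline{f^N_{optm}(s)}|_1$.
   Context: Standard LLP setup. $\Sigma=\Sigma_c\,\dot\cup\,\Sigma_{uc}$ is a finite alphabet partitioned into controllable and uncontrollable events. The plant $G$ has generated language $L(G)$ and marked language $L_m(G)$ with $L(G)=\overline{L_m(G)}$ ($\overline{M}$ = set of prefixes of strings in $M$). The legal language $K\subseteq L_m(G)$ satisfies $K=\overline{K}\cap L_m(G)$. For a prefix-closed $L$, $M$ is controllable w.r.t. $L$ if $\overline{M}\Sigma_{uc}\cap L\subseteq\overline{M}$. For a language $L$ and $s\in\Sigma^*$: $L/s=\{t: st\in L\}$; $L|_N=\{t\in L:|t|\le N\}$. $M^{\uparrow/s|_N}$ is the supremal sublanguage of $M$ controllable w.r.t. $L(G)/s|_N$. Conservative attitude: $f^N_{cons}(s)=[K/s|_{N-1}]^{\uparrow/s|_N}$; optimistic attitude: $f^N_{optm}(s)=[K/s|_N\cup(\overline{K}/s|_N\setminus\overline{K}/s|_{N-1})]^{\uparrow/s|_N}$. *)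

theory Defs
  imports Main
begin

definition pref :: "'a list set \<Rightarrow> 'a list set" where
  "pref M = {t. \<exists>u. t @ u \<in> M}"

definition quot :: "'a list set \<Rightarrow> 'a list \<Rightarrow> 'a list set" where
  "quot L s = {t. s @ t \<in> L}"

definition trunc :: "'a list set \<Rightarrow> nat \<Rightarrow> 'a list set" where
  "trunc L N = {t \<in> L. length t \<le> N}"

definition controllable :: "'a set \<Rightarrow> 'a list set \<Rightarrow> 'a list set \<Rightarrow> bool" where
  "controllable Sig_uc L M \<longleftrightarrow>
     (\<forall>t \<sigma>. t \<in> pref M \<and> \<sigma> \<in> Sig_uc \<and> t @ [\<sigma>] \<in> L \<longrightarrow> t @ [\<sigma>] \<in> pref M)"

definition supC :: "'a set \<Rightarrow> 'a list set \<Rightarrow> 'a list set \<Rightarrow> 'a list set" where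
  "supC Sig_uc L M = \<Union>{M'. M' \<subseteq> M \<and> controllable Sig_uc L M'}"

definition sup_ctrl :: "'a set \<Rightarrow> 'a list set \<Rightarrow> 'a list \<Rightarrow> nat \<Rightarrow> 'a list set \<Rightarrow> 'a list set" where
  "sup_ctrl Sig_uc LG s N M = supC Sig_uc (trunc (quot LG s) N) M"

definition f_cons :: "'a set \<Rightarrow> 'a list set \<Rightarrow> 'a list set \<Rightarrow> nat \<Rightarrow> 'a list \<Rightarrow> 'a list set" where
  "f_cons Sig_uc LG K N s = sup_ctrl Sig_uc LG s N (trunc (quot K s) (N - 1))"

definition f_optm :: "'a set \<Rightarrow> 'a list set \<Rightarrow> 'a list set \<Rightarrow> nat \<Rightarrow> 'a list \<Rightarrow> 'a list set" where
  "f_optm Sig_uc LG K N s = sup_ctrl Sig_uc LG s N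
     (trunc (quot K s) N \<union>
      (trunc (quot (pref K) s) N - trunc (quot (pref K) s) (N - 1)))"

end

theory Submission
  imports Defs
begin

text \<open>A witness for the conservative supervisor is any controllable language of words shorter
  than M. Cutting it at depth N, while marking the words of length exactly N it passes through,
  gives a language that is controllable up to depth N, lies in the optimistic legal language
  (the cut-off words being prefixes of legal words of maximal length), and has the same prefixes
  up to length N; in particular the same first events.\<close>

lemma pref_mono: "A \<subseteq> B \<Longrightarrow> pref A \<subseteq> pref B"
  unfolding pref_def by blast

lemma pref_quot: "pref (quot K s) = quot (pref K) s"
  unfolding pref_def quot_def by simp

lemma subset_supC: "A \<subseteq> X \<Longrightarrow> controllable Sig_uc L A \<Longrightarrow> A \<subseteq> supC Sig_uc L X"
  unfolding supC_def by blast

lemma pref_supC_obtain: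
  assumes "t \<in> pref (supC Sig_uc L X)"
  obtains A where "A \<subseteq> X" "controllable Sig_uc L A" "t \<in> pref A"
  using assms unfolding supC_def pref_def by blast

lemma pref_trunc_subset: "pref (trunc X n) \<subseteq> trunc (pref X) n"
  unfolding pref_def trunc_def by auto

definition cutoff :: "nat \<Rightarrow> 'a list set \<Rightarrow> 'a list set" where
  "cutoff N A = trunc A N \<union> {x \<in> pref A. length x = N}"

lemma pref_cutoff: "pref (cutoff N A) = trunc (pref A) N"
proof
  show "pref (cutoff N A) \<subseteq> trunc (pref A) N"
    unfolding cutoff_def pref_def trunc_def by fastforce
next
  show "trunc (pref A) N \<subseteq> pref (cutoff N A)"
  proof
    fix w assume "w \<in> trunc (pref A) N"
    then obtain u where wu: "w @ u \<in> A" and len: "length w \<le> N"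
      unfolding trunc_def pref_def by blast
    show "w \<in> pref (cutoff N A)"
    proof (cases "length (w @ u) \<le> N")
      case True
      then have "w @ u \<in> cutoff N A" using wu unfolding cutoff_def trunc_def by simp
      then show ?thesis unfolding pref_def by blast
    next
      case False
      define v where "v = take (N - length w) u"
      have "(w @ v) @ drop (N - length w) u \<in> A" using wu by (simp add: v_def)
      then have "w @ v \<in> pref A" unfolding pref_def by blast
      moreover have "length (w @ v) = N" using False len by (simp add: v_def)
      ultimately have "w @ v \<in> cutoff N A" unfolding cutoff_def by simp
      then show ?thesis unfolding pref_def by blast
    qed
  qed
qed

lemma controllable_cutoff:
  "controllable Sig_uc L A \<Longrightarrow> controllable Sig_uc (trunc L N) (cutoff N A)"
  unfolding controllable_def pref_cutoff by (simp add: trunc_def)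

lemma controllable_of_trunc:
  assumes "controllable Sig_uc (trunc L M) A" and "\<And>w. w \<in> pref A \<Longrightarrow> length w < M"
  shows "controllable Sig_uc L A"
  using assms unfolding controllable_def trunc_def by fastforce

lemma cutoff_subset:
  assumes "A \<subseteq> X" and "N \<ge> 1"
  shows "cutoff N A \<subseteq> trunc X N \<union> (trunc (pref X) N - trunc (pref X) (N - 1))"
proof -
  have "{x \<in> pref A. length x = N} \<subseteq> trunc (pref X) N - trunc (pref X) (N - 1)"
    using pref_mono[OF assms(1)] assms(2) unfolding trunc_def by auto
  moreover have "trunc A N \<subseteq> trunc X N"
    using assms(1) unfolding trunc_def by blast
  ultimately show ?thesis unfolding cutoff_def by blast
qed

theorem theorem7:
  fixes Sig_c Sig_uc :: "'a set" and LG LmG K :: "'a list set"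
    and s :: "'a list" and N M :: nat
  assumes "finite (Sig_c \<union> Sig_uc)" and "Sig_c \<inter> Sig_uc = {}"
    and "LmG \<subseteq> lists (Sig_c \<union> Sig_uc)"
    and "LG = pref LmG"
    and "K \<subseteq> LmG" and "K = pref K \<inter> LmG"
    and "s \<in> lists (Sig_c \<union> Sig_uc)"
    and "N \<ge> 1" and "M \<ge> 1"
  shows "trunc (pref (f_cons Sig_uc LG K M s)) 1 \<subseteq> trunc (pref (f_optm Sig_uc LG K N s)) 1"
proof
  fix t assume "t \<in> trunc (pref (f_cons Sig_uc LG K M s)) 1"
  then have short: "length t \<le> 1"
    and t_cons: "t \<in> pref (supC Sig_uc (trunc (quot LG s) M) (trunc (quot K s) (M - 1)))"
    by (simp_all add: trunc_def f_cons_def sup_ctrl_def)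
  from t_cons obtain A where A_legal: "A \<subseteq> trunc (quot K s) (M - 1)"
    and A_ctrl: "controllable Sig_uc (trunc (quot LG s) M) A" and "t \<in> pref A"
    by (rule pref_supC_obtain)
  have "length w < M" if "w \<in> pref A" for w
  proof -
    have "w \<in> trunc (pref (quot K s)) (M - 1)"
      using pref_mono[OF A_legal] pref_trunc_subset \<open>w \<in> pref A\<close> by blast
    then have "length w \<le> M - 1" by (simp add: trunc_def)
    then show ?thesis using \<open>M \<ge> 1\<close> by linarith
  qed
  with A_ctrl have "controllable Sig_uc (quot LG s) A"
    by (rule controllable_of_trunc)
  then have "controllable Sig_uc (trunc (quot LG s) N) (cutoff N A)"
    by (rule controllable_cutoff)
  moreover have "A \<subseteq> quot K s"
    using A_legal by (auto simp: trunc_def)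
  then have "cutoff N A \<subseteq> trunc (quot K s) N \<union>
      (trunc (quot (pref K) s) N - trunc (quot (pref K) s) (N - 1))"
    using cutoff_subset[of A "quot K s" N] \<open>N \<ge> 1\<close> by (simp only: pref_quot)
  ultimately have "cutoff N A \<subseteq> f_optm Sig_uc LG K N s"
    unfolding f_optm_def sup_ctrl_def by (rule subset_supC[rotated])
  moreover have "t \<in> pref (cutoff N A)"
    using \<open>t \<in> pref A\<close> short \<open>N \<ge> 1\<close> by (simp add: pref_cutoff trunc_def)
  ultimately have "t \<in> pref (f_optm Sig_uc LG K N s)"
    using pref_mono[of "cutoff N A"] by blast
  with short show "t \<in> trunc (pref (f_optm Sig_uc LG K N s)) 1"
    by (simp add: trunc_def)
qed

end
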